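(* For every $h\ge1$, $\mathsf{sumPI}(\mathrm{MAJ}_h)=\mathsf{maxPI}(\mathrm{MAJ}_h)=2^h$.
   Context: $\mathrm{MAJ}_h:\{0,1\}^{3^h}\to\{0,1\}$ is the recursive majority of three function: the function computed by a complete ternary tree of depth $h$ whose internal nodes are majority-of-three gates and whose leaves are the input bits. For $f:\{0,1\}^N\to\{0,1\}$, with $p=\{p_x\}$ ranging over families of probability distributions on $[N]$, $$\mathsf{sumPI}(f)=\min_{p}\ \max_{x,y:\ f(x)\neq f(y)} \frac{1}{\sum_{i:\,x_i\neq y_i}\sqrt{p_x(i)p_y(i)}},\qquad \mathsf{maxPI}(f)=\min_{p}\ \max_{x,y:\ f(x)\neq f(y)} \frac{1}{\max_{i:\,x_i\neq y_i}\sqrt{p_x(i)p_y(i)}}.$$ *)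

theory Defs
  imports Complex_Main "HOL-Library.Extended_Real"
begin

text \<open>Boolean functions on N bits are functions on bool lists; only lists of
  length N are considered inputs.\<close>

definition maj3 :: "bool \<Rightarrow> bool \<Rightarrow> bool \<Rightarrow> bool" where
  "maj3 a b c = ((a \<and> b) \<or> (a \<and> c) \<or> (b \<and> c))"

fun MAJ :: "nat \<Rightarrow> bool list \<Rightarrow> bool" where
  "MAJ 0 x = x ! 0"
| "MAJ (Suc h) x = maj3 (MAJ h (take (3^h) x))
                        (MAJ h (take (3^h) (drop (3^h) x)))
                        (MAJ h (drop (2 * 3^h) x))"

definition prob_families :: "nat \<Rightarrow> (bool list \<Rightarrow> nat \<Rightarrow> real) set" where
  "prob_families N = {p. \<forall>x. length x = N \<longrightarrow>
       (\<forall>i<N. 0 \<le> p x i) \<and> (\<Sum>i<N. p x i) = 1}"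

definition diff_pairs :: "nat \<Rightarrow> (bool list \<Rightarrow> bool) \<Rightarrow> (bool list \<times> bool list) set" where
  "diff_pairs N f = {(x, y). length x = N \<and> length y = N \<and> f x \<noteq> f y}"

definition diff_idx :: "nat \<Rightarrow> bool list \<Rightarrow> bool list \<Rightarrow> nat set" where
  "diff_idx N x y = {i. i < N \<and> x ! i \<noteq> y ! i}"

text \<open>Values in extended reals; 1/0 is read as infinity (ereal inverse 0 = \<infinity>).\<close>
definition sumPI :: "nat \<Rightarrow> (bool list \<Rightarrow> bool) \<Rightarrow> ereal" where
  "sumPI N f = (INF p \<in> prob_families N. SUP xy \<in> diff_pairs N f.
      inverse (ereal (\<Sum>i\<in>diff_idx N (fst xy) (snd xy).
                        sqrt (p (fst xy) i * p (snd xy) i))))"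

definition maxPI :: "nat \<Rightarrow> (bool list \<Rightarrow> bool) \<Rightarrow> ereal" where
  "maxPI N f = (INF p \<in> prob_families N. SUP xy \<in> diff_pairs N f.
      inverse (SUP i \<in> diff_idx N (fst xy) (snd xy).
                        ereal (sqrt (p (fst xy) i * p (snd xy) i))))"

end

(*
  Upper bound: each input x has a canonical certificate of 2^h leaves, obtained by following,
  at every gate, two children that agree with the gate.  Two such pairs of children always
  share a child, so the certificates of inputs with different values share a leaf where the
  inputs differ, and the uniform distribution on the certificate gives maxPI <= 2^h.

  Lower bound: call an input balanced if every gate sees a 2-1 split.  Flipping a certificate
  leaf of a balanced input flips its value and yields a balanced input whose certificate still
  contains that leaf.  This is an involution on the incidences (x, i); by AM-GM the average of
  sqrt (p x i * p (flip x) i) over the incidences is at most the average of p x i, which is at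
  most 2^-h because each p x has total mass 1 and each certificate has 2^h leaves.  So some
  flip pair certifies sumPI >= 2^h.
  Since sumPI <= maxPI, both equal 2^h.
*)
theory Submission
  imports Defs
begin

definition flip_at :: "nat \<Rightarrow> bool list \<Rightarrow> bool list" where
  "flip_at i x = x[i := \<not> x ! i]"

lemma length_flip_at [simp]: "length (flip_at i x) = length x"
  by (simp add: flip_at_def)

lemma flip_at_flip_at [simp]: "i < length x \<Longrightarrow> flip_at i (flip_at i x) = x"
  by (simp add: flip_at_def)

lemma diff_idx_flip_at: "i < N \<Longrightarrow> length x = N \<Longrightarrow> diff_idx N x (flip_at i x) = {i}"
  by (auto simp: diff_idx_def flip_at_def nth_list_update)

lemma diff_idx_nonempty:
  assumes "(x, y) \<in> diff_pairs N f"
  shows "diff_idx N x y \<noteq> {}"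
proof -
  have "length x = N" "length y = N" "x \<noteq> y" using assms by (auto simp: diff_pairs_def)
  then have "\<exists>i<N. x ! i \<noteq> y ! i" by (auto simp: list_eq_iff_nth_eq)
  then show ?thesis by (auto simp: diff_idx_def)
qed

lemma prob_families_nonneg: "p \<in> prob_families N \<Longrightarrow> length x = N \<Longrightarrow> i < N \<Longrightarrow> 0 \<le> p x i"
  by (simp add: prob_families_def)

lemma sumPI_le_maxPI: "sumPI N f \<le> maxPI N f"
  unfolding sumPI_def maxPI_def
proof (intro INF_superset_mono SUP_subset_mono order.refl)
  fix p and xy :: "bool list \<times> bool list"
  assume p: "p \<in> prob_families N" and xy: "xy \<in> diff_pairs N f"
  obtain x y where xy_eq: "xy = (x, y)" by fastforce
  define D where "D = diff_idx N x y"
  define s where "s i = sqrt (p x i * p y i)" for i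
  have D: "finite D" "D \<noteq> {}" using diff_idx_nonempty xy by (auto simp: D_def diff_idx_def xy_eq)
  have s_nonneg: "0 \<le> s i" if "i \<in> D" for i
    using that p xy by (auto simp: s_def D_def diff_idx_def diff_pairs_def xy_eq prob_families_nonneg)
  have "0 \<le> (SUP i\<in>D. ereal (s i))"
    using D(2) s_nonneg by (auto intro: SUP_upper2)
  moreover have "(SUP i\<in>D. ereal (s i)) \<le> ereal (sum s D)"
    using D(1) s_nonneg by (auto intro!: SUP_least member_le_sum)
  ultimately have "inverse (ereal (sum s D)) \<le> inverse (SUP i\<in>D. ereal (s i))"
    by (rule ereal_inverse_antimono)
  then show "inverse (ereal (\<Sum>i\<in>diff_idx N (fst xy) (snd xy). sqrt (p (fst xy) i * p (snd xy) i)))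
      \<le> inverse (SUP i\<in>diff_idx N (fst xy) (snd xy). ereal (sqrt (p (fst xy) i * p (snd xy) i)))"
    by (simp add: xy_eq D_def s_def)
qed

lemma ereal_le_inverse_ereal: "0 < c \<Longrightarrow> 0 \<le> s \<Longrightarrow> s \<le> 1 / c \<Longrightarrow> ereal c \<le> inverse (ereal s)"
  by (cases "s = 0") (auto simp: field_simps)

lemma inverse_le_ereal: "0 < c \<Longrightarrow> ereal (1 / c) \<le> t \<Longrightarrow> inverse t \<le> ereal c"
  using ereal_inverse_antimono[of "ereal (1 / c)" t] by simp

lemma maxPI_le_certificate_size:
  assumes k: "0 < k"
    and C: "\<And>x. length x = N \<Longrightarrow> C x \<subseteq> {..<N} \<and> card (C x) = k"
    and cert: "\<And>x y. (x, y) \<in> diff_pairs N f \<Longrightarrow> \<exists>i \<in> C x \<inter> C y. x ! i \<noteq> y ! i"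
  shows "maxPI N f \<le> ereal k"
proof -
  define p where "p x i = (if i \<in> C x then 1 / k else 0)" for x i
  have "(\<Sum>i<N. p x i) = 1" if "length x = N" for x
  proof -
    have "(\<Sum>i<N. p x i) = (\<Sum>i\<in>{..<N} \<inter> C x. 1 / k)"
      unfolding p_def by (rule sum.inter_restrict[symmetric]) simp
    also have "\<dots> = 1" using C[OF that] k by (simp add: Int_absorb1)
    finally show ?thesis .
  qed
  then have p: "p \<in> prob_families N" by (simp add: prob_families_def p_def)
  have "inverse (SUP i\<in>diff_idx N x y. ereal (sqrt (p x i * p y i))) \<le> ereal k"
    if xy: "(x, y) \<in> diff_pairs N f" for x y
  proof (rule inverse_le_ereal)
    obtain i where i: "i \<in> C x" "i \<in> C y" "x ! i \<noteq> y ! i" using cert[OF xy] by blast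
    have "i \<in> diff_idx N x y" using i C xy by (auto simp: diff_idx_def diff_pairs_def)
    moreover have "sqrt (p x i * p y i) = 1 / k" using i k by (simp add: p_def real_sqrt_divide)
    ultimately show "ereal (1 / k) \<le> (SUP i\<in>diff_idx N x y. ereal (sqrt (p x i * p y i)))"
      by (intro SUP_upper2) auto
  qed (use k in simp)
  then show ?thesis
    unfolding maxPI_def by (intro INF_lower2[OF p] SUP_least) auto
qed

lemma exists_sqrt_mult_involution_le_average:
  fixes q :: "'a \<Rightarrow> real"
  assumes P: "finite P" "P \<noteq> {}"
    and \<sigma>: "\<And>z. z \<in> P \<Longrightarrow> \<sigma> z \<in> P" "\<And>z. z \<in> P \<Longrightarrow> \<sigma> (\<sigma> z) = z"
    and q: "\<And>z. z \<in> P \<Longrightarrow> 0 \<le> q z"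
  shows "\<exists>z\<in>P. sqrt (q z * q (\<sigma> z)) \<le> sum q P / card P"
proof (rule ccontr)
  assume none: "\<not> ?thesis"
  have bij: "bij_betw \<sigma> P P" using \<sigma> by (intro bij_betw_byWitness[where f' = \<sigma>]) auto
  have "(\<Sum>z\<in>P. sum q P / card P) < (\<Sum>z\<in>P. sqrt (q z * q (\<sigma> z)))"
    using P none by (intro sum_strict_mono) auto
  also have "\<dots> \<le> (\<Sum>z\<in>P. (q z + q (\<sigma> z)) / 2)"
    using q \<sigma>(1) by (intro sum_mono arith_geo_mean_sqrt) auto
  also have "\<dots> = (sum q P + sum (q \<circ> \<sigma>) P) / 2"
    by (simp add: sum.distrib flip: sum_divide_distrib)
  also have "\<dots> = sum q P"
    using bij by (simp add: comp_def sum.reindex_bij_betw)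
  finally show False using P by simp
qed

lemma exists_flip_small_overlap:
  assumes p: "p \<in> prob_families N" and "B \<noteq> {}" and k: "0 < k"
    and B: "\<And>x. x \<in> B \<Longrightarrow> length x = N \<and> C x \<subseteq> {..<N} \<and> card (C x) = k"
    and flip: "\<And>x i. x \<in> B \<Longrightarrow> i \<in> C x \<Longrightarrow> flip_at i x \<in> B \<and> i \<in> C (flip_at i x)"
  shows "\<exists>x\<in>B. \<exists>i\<in>C x. sqrt (p x i * p (flip_at i x) i) \<le> 1 / k"
proof -
  define P where "P = Sigma B C"
  define \<sigma> where "\<sigma> = (\<lambda>(x, i). (flip_at i x, i))"
  define q where "q = (\<lambda>(x, i). p x i)"
  have "finite B"
    by (rule finite_subset[OF _ finite_lists_length_eq[of "UNIV :: bool set" N]]) (use B in auto)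
  moreover have fin_C: "\<forall>x\<in>B. finite (C x)" using B finite_subset by blast
  ultimately have P: "finite P" "card P = k * card B" using B by (simp_all add: P_def)
  with \<open>B \<noteq> {}\<close> \<open>finite B\<close> k have "P \<noteq> {}" by auto
  have "sum q P = (\<Sum>x\<in>B. \<Sum>i\<in>C x. p x i)"
    unfolding P_def q_def using \<open>finite B\<close> fin_C by (rule sum.Sigma[symmetric])
  also have "\<dots> \<le> (\<Sum>x\<in>B. \<Sum>i<N. p x i)"
    using B p by (intro sum_mono sum_mono2) (auto simp: prob_families_nonneg)
  also have "\<dots> = card B" using B p by (simp add: prob_families_def)
  finally have "sum q P / card P \<le> card B / card P" by (rule divide_right_mono) simp
  also have "\<dots> = 1 / k" using P \<open>P \<noteq> {}\<close> by auto
  finally have avg: "sum q P / card P \<le> 1 / k" .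
  have "\<exists>z\<in>P. sqrt (q z * q (\<sigma> z)) \<le> sum q P / card P"
  proof (rule exists_sqrt_mult_involution_le_average)
    show "\<sigma> z \<in> P" "\<sigma> (\<sigma> z) = z" "0 \<le> q z" if "z \<in> P" for z
      using that flip B p by (auto simp: P_def \<sigma>_def q_def prob_families_nonneg subset_iff)
  qed (use P \<open>P \<noteq> {}\<close> in auto)
  then obtain z where z: "z \<in> P" "sqrt (q z * q (\<sigma> z)) \<le> 1 / k"
    using avg by (blast intro: order_trans)
  moreover obtain x i where "z = (x, i)" by fastforce
  ultimately show ?thesis by (auto simp: P_def \<sigma>_def q_def)
qed

lemma sumPI_ge_flip_adversary:
  assumes "B \<noteq> {}" and k: "0 < k"
    and B: "\<And>x. x \<in> B \<Longrightarrow> length x = N \<and> C x \<subseteq> {..<N} \<and> card (C x) = k"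
    and flip: "\<And>x i. x \<in> B \<Longrightarrow> i \<in> C x \<Longrightarrow>
      flip_at i x \<in> B \<and> i \<in> C (flip_at i x) \<and> f (flip_at i x) \<noteq> f x"
  shows "ereal k \<le> sumPI N f"
  unfolding sumPI_def
proof (rule INF_greatest)
  fix p assume p: "p \<in> prob_families N"
  then obtain x i where xi: "x \<in> B" "i \<in> C x" and small: "sqrt (p x i * p (flip_at i x) i) \<le> 1 / k"
    using exists_flip_small_overlap[of p N B k C] assms by blast
  have xy: "(x, flip_at i x) \<in> diff_pairs N f" using B flip xi by (auto simp: diff_pairs_def)
  have i: "i < N" "length x = N" using B xi by auto
  then have "diff_idx N x (flip_at i x) = {i}" by (rule diff_idx_flip_at)
  moreover have "0 \<le> p x i * p (flip_at i x) i"
    using p i by (simp add: prob_families_nonneg)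
  then have "ereal k \<le> inverse (ereal (sqrt (p x i * p (flip_at i x) i)))"
    using small k by (intro ereal_le_inverse_ereal) auto
  ultimately show "ereal k \<le> (SUP xy\<in>diff_pairs N f. inverse (ereal
      (\<Sum>i\<in>diff_idx N (fst xy) (snd xy). sqrt (p (fst xy) i * p (snd xy) i))))"
    by (intro SUP_upper2[OF xy]) simp
qed

fun maj_cert :: "nat \<Rightarrow> bool list \<Rightarrow> nat set" where
  "maj_cert 0 x = {0}"
| "maj_cert (Suc h) x =
    (let a = take (3^h) x; b = take (3^h) (drop (3^h) x); c = drop (2 * 3^h) x;
         A = maj_cert h a; B = (+) (3^h) ` maj_cert h b; C = (+) (2 * 3^h) ` maj_cert h c
     in if MAJ h a = MAJ h b then A \<union> B else if MAJ h a = MAJ h c then A \<union> C else B \<union> C)"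

fun maj_balanced :: "nat \<Rightarrow> bool list \<Rightarrow> bool" where
  "maj_balanced 0 x = True"
| "maj_balanced (Suc h) x =
    (let a = take (3^h) x; b = take (3^h) (drop (3^h) x); c = drop (2 * 3^h) x
     in maj_balanced h a \<and> maj_balanced h b \<and> maj_balanced h c \<and>
        \<not> (MAJ h a = MAJ h b \<and> MAJ h b = MAJ h c))"

lemma obtain_three_blocks:
  assumes "length x = 3 ^ Suc h"
  obtains a b c where "x = a @ b @ c" "length a = 3^h" "length b = 3^h" "length c = 3^h"
proof
  show "x = take (3^h) x @ take (3^h) (drop (3^h) x) @ drop (2 * 3^h) x"
    by (metis append_take_drop_id drop_drop mult_2 add.commute)
qed (use assms in auto)

context
  fixes a b c :: "bool list" and h :: nat
  assumes blocks: "length a = 3^h" "length b = 3^h" "length c = 3^h"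
begin

lemma MAJ_Suc_append: "MAJ (Suc h) (a @ b @ c) = maj3 (MAJ h a) (MAJ h b) (MAJ h c)"
  using blocks by simp

lemma maj_cert_Suc_append:
  "maj_cert (Suc h) (a @ b @ c) =
    (if MAJ h a = MAJ h b then maj_cert h a \<union> (+) (3^h) ` maj_cert h b
     else if MAJ h a = MAJ h c then maj_cert h a \<union> (+) (2 * 3^h) ` maj_cert h c
     else (+) (3^h) ` maj_cert h b \<union> (+) (2 * 3^h) ` maj_cert h c)"
  using blocks by (simp add: Let_def)

lemma maj_balanced_Suc_append:
  "maj_balanced (Suc h) (a @ b @ c) \<longleftrightarrow>
    maj_balanced h a \<and> maj_balanced h b \<and> maj_balanced h c \<and>
    \<not> (MAJ h a = MAJ h b \<and> MAJ h b = MAJ h c)"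
  using blocks by (simp add: Let_def)

end

declare MAJ.simps(2) [simp del] maj_cert.simps(2) [simp del] maj_balanced.simps(2) [simp del]

lemma maj_cert_subset: "length x = 3^h \<Longrightarrow> maj_cert h x \<subseteq> {..<3^h}"
proof (induction h arbitrary: x)
  case (Suc h)
  then obtain a b c where x: "x = a @ b @ c" and l: "length a = 3^h" "length b = 3^h" "length c = 3^h"
    by (blast elim: obtain_three_blocks)
  have "maj_cert h a \<subseteq> {..<3 ^ Suc h}" "(+) (3^h) ` maj_cert h b \<subseteq> {..<3 ^ Suc h}"
    "(+) (2 * 3^h) ` maj_cert h c \<subseteq> {..<3 ^ Suc h}"
    using Suc.IH l by fastforce+
  then show ?case unfolding x maj_cert_Suc_append[OF l] by auto
qed simp

lemma card_maj_cert: "length x = 3^h \<Longrightarrow> card (maj_cert h x) = 2^h"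
proof (induction h arbitrary: x)
  case (Suc h)
  then obtain a b c where x: "x = a @ b @ c" and l: "length a = 3^h" "length b = 3^h" "length c = 3^h"
    by (blast elim: obtain_three_blocks)
  define A B C where "A = maj_cert h a" and "B = (+) (3^h) ` maj_cert h b"
    and "C = (+) (2 * 3^h) ` maj_cert h c"
  have sub: "A \<subseteq> {..<3^h}" "B \<subseteq> {3^h..<2 * 3^h}" "C \<subseteq> {2 * 3^h..<3 * 3^h}"
    using maj_cert_subset l by (fastforce simp: A_def B_def C_def)+
  then have fin: "finite A" "finite B" "finite C" by (auto intro: finite_subset)
  have disj: "A \<inter> B = {}" "A \<inter> C = {}" "B \<inter> C = {}" using sub by fastforce+
  have "card A = 2^h" "card B = 2^h" "card C = 2^h"
    using Suc.IH l by (simp_all add: A_def B_def C_def card_image)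
  with fin disj show ?case
    unfolding x maj_cert_Suc_append[OF l] by (simp add: card_Un_disjoint flip: A_def B_def C_def)
qed simp

lemma maj_cert_separates:
  "length x = 3^h \<Longrightarrow> length y = 3^h \<Longrightarrow> MAJ h x \<noteq> MAJ h y \<Longrightarrow>
    \<exists>i \<in> maj_cert h x \<inter> maj_cert h y. x ! i \<noteq> y ! i"
proof (induction h arbitrary: x y)
  case (Suc h)
  obtain a b c where x: "x = a @ b @ c" and l: "length a = 3^h" "length b = 3^h" "length c = 3^h"
    using Suc.prems(1) by (blast elim: obtain_three_blocks)
  obtain a' b' c' where y: "y = a' @ b' @ c'" and l': "length a' = 3^h" "length b' = 3^h" "length c' = 3^h"
    using Suc.prems(2) by (blast elim: obtain_three_blocks)
  have block: "\<exists>i \<in> (+) off ` maj_cert h u \<inter> (+) off ` maj_cert h u'. x ! i \<noteq> y ! i"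
    if diff: "MAJ h u \<noteq> MAJ h u'" and len: "length u = 3^h" "length u' = 3^h"
      and nth: "\<forall>j<3^h. x ! (off + j) = u ! j \<and> y ! (off + j) = u' ! j" for u u' off
  proof -
    obtain j where j: "j \<in> maj_cert h u" "j \<in> maj_cert h u'" "u ! j \<noteq> u' ! j"
      using Suc.IH diff len by blast
    moreover have "j < 3^h" using maj_cert_subset len(1) j(1) by blast
    ultimately show ?thesis using nth by (intro bexI[of _ "off + j"]) auto
  qed
  have A: "MAJ h a \<noteq> MAJ h a' \<Longrightarrow> \<exists>i \<in> maj_cert h a \<inter> maj_cert h a'. x ! i \<noteq> y ! i"
    using block[of a a' 0] l l' by (simp add: x y nth_append)
  have B: "MAJ h b \<noteq> MAJ h b' \<Longrightarrow>
      \<exists>i \<in> (+) (3^h) ` maj_cert h b \<inter> (+) (3^h) ` maj_cert h b'. x ! i \<noteq> y ! i"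
    using block[of b b' "3^h"] l l' by (simp add: x y nth_append)
  have C: "MAJ h c \<noteq> MAJ h c' \<Longrightarrow>
      \<exists>i \<in> (+) (2 * 3^h) ` maj_cert h c \<inter> (+) (2 * 3^h) ` maj_cert h c'. x ! i \<noteq> y ! i"
    using block[of c c' "2 * 3^h"] l l' by (simp add: x y nth_append)
  have "maj3 (MAJ h a) (MAJ h b) (MAJ h c) \<noteq> maj3 (MAJ h a') (MAJ h b') (MAJ h c')"
    using Suc.prems(3) by (simp add: x y MAJ_Suc_append l l')
  \<comment> \<open>Each certificate follows two children that agree with the root; two such pairs of
    children share a child, and there the values differ.\<close>
  with A B C show ?case
    unfolding x y maj_cert_Suc_append[OF l] maj_cert_Suc_append[OF l'] maj3_def
    unfolding x[symmetric] y[symmetric]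
    by (cases "MAJ h a"; cases "MAJ h b"; cases "MAJ h c"; cases "MAJ h a'"; cases "MAJ h b'";
        cases "MAJ h c'") (simp_all, blast+)
qed simp

lemma flip_at_append_left: "i < length a \<Longrightarrow> flip_at i (a @ b) = flip_at i a @ b"
  by (simp add: flip_at_def list_update_append nth_append)

lemma flip_at_append_right: "flip_at (length a + j) (a @ b) = a @ flip_at j b"
  by (simp add: flip_at_def list_update_append nth_append)

lemma maj_balanced_flip:
  "length x = 3^h \<Longrightarrow> maj_balanced h x \<Longrightarrow> i \<in> maj_cert h x \<Longrightarrow>
    maj_balanced h (flip_at i x) \<and> MAJ h (flip_at i x) \<noteq> MAJ h x \<and> i \<in> maj_cert h (flip_at i x)"
proof (induction h arbitrary: x i)
  case 0
  then show ?case by (cases x) (auto simp: flip_at_def)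
next
  case (Suc h)
  obtain a b c where x: "x = a @ b @ c" and l: "length a = 3^h" "length b = 3^h" "length c = 3^h"
    using Suc.prems(1) by (blast elim: obtain_three_blocks)
  have bal: "maj_balanced h a" "maj_balanced h b" "maj_balanced h c"
    "\<not> (MAJ h a = MAJ h b \<and> MAJ h b = MAJ h c)"
    using Suc.prems(2) by (simp_all add: x maj_balanced_Suc_append[OF l])
  have "i \<in> maj_cert (Suc h) (a @ b @ c)" using Suc.prems(3) by (simp add: x)
  then consider (A) "i \<in> maj_cert h a" "MAJ h a = MAJ h b \<or> MAJ h a = MAJ h c"
    | (B) j where "i = 3^h + j" "j \<in> maj_cert h b" "MAJ h a = MAJ h b \<or> MAJ h a \<noteq> MAJ h c"
    | (C) j where "i = 2 * 3^h + j" "j \<in> maj_cert h c" "MAJ h a \<noteq> MAJ h b"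
    unfolding maj_cert_Suc_append[OF l] by (auto split: if_splits)
  then show ?case
  proof cases
    case A
    have "i < length a" using A(1) maj_cert_subset[of a h] l by auto
    then have "flip_at i x = flip_at i a @ b @ c" by (simp add: x flip_at_append_left)
    moreover have "length (flip_at i a) = 3^h" using l by simp
    ultimately show ?thesis
      using Suc.IH[of a i] A bal l
      by (simp add: x MAJ_Suc_append maj_balanced_Suc_append maj_cert_Suc_append maj3_def) blast
  next
    case (B j)
    have "j < length b" using B(2) maj_cert_subset[of b h] l by auto
    then have "flip_at i x = a @ flip_at j b @ c"
      using B(1) l by (simp add: x flip_at_append_left flip_at_append_right[of a, simplified l])
    moreover have "length (flip_at j b) = 3^h" using l by simp
    ultimately show ?thesis
      using Suc.IH[of b j] B bal l
      by (simp add: x MAJ_Suc_append maj_balanced_Suc_append maj_cert_Suc_append maj3_def) blast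
  next
    case (C j)
    have "flip_at i x = a @ b @ flip_at j c"
      using C(1) l flip_at_append_right[of "a @ b" j c] by (simp add: x mult_2)
    moreover have "length (flip_at j c) = 3^h" using l by simp
    ultimately show ?thesis
      using Suc.IH[of c j] C bal l
      by (simp add: x MAJ_Suc_append maj_balanced_Suc_append maj_cert_Suc_append maj3_def)
  qed
qed

lemma maj_balanced_exists: "\<exists>x. length x = 3^h \<and> maj_balanced h x \<and> MAJ h x = v"
proof (induction h arbitrary: v)
  case 0
  show ?case by (intro exI[of _ "[v]"]) simp
next
  case (Suc h)
  obtain x y where "length x = 3^h" "maj_balanced h x" "MAJ h x = v"
    "length y = 3^h" "maj_balanced h y" "MAJ h y = (\<not> v)"
    using Suc.IH by meson
  then show ?case
    by (intro exI[of _ "x @ x @ y"]) (simp add: maj_balanced_Suc_append MAJ_Suc_append maj3_def)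
qed

theorem mainTheorem14:
  fixes h :: nat
  assumes "h \<ge> 1"
  shows "sumPI (3^h) (MAJ h) = ereal (2^h) \<and> maxPI (3^h) (MAJ h) = ereal (2^h)"
proof -
  have "maxPI (3^h) (MAJ h) \<le> ereal (real (2^h))"
  proof (rule maxPI_le_certificate_size)
    show "length x = 3^h \<Longrightarrow> maj_cert h x \<subseteq> {..<3^h} \<and> card (maj_cert h x) = 2^h" for x
      by (simp add: maj_cert_subset card_maj_cert)
    show "(x, y) \<in> diff_pairs (3^h) (MAJ h) \<Longrightarrow>
        \<exists>i\<in>maj_cert h x \<inter> maj_cert h y. x ! i \<noteq> y ! i" for x y
      by (rule maj_cert_separates) (auto simp: diff_pairs_def)
  qed simp
  moreover have "ereal (real (2^h)) \<le> sumPI (3^h) (MAJ h)"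
  proof (rule sumPI_ge_flip_adversary)
    show "{x. length x = 3^h \<and> maj_balanced h x} \<noteq> {}" using maj_balanced_exists by blast
    show "x \<in> {x. length x = 3^h \<and> maj_balanced h x} \<Longrightarrow>
        length x = 3^h \<and> maj_cert h x \<subseteq> {..<3^h} \<and> card (maj_cert h x) = 2^h" for x
      by (simp add: maj_cert_subset card_maj_cert)
    show "x \<in> {x. length x = 3^h \<and> maj_balanced h x} \<Longrightarrow> i \<in> maj_cert h x \<Longrightarrow>
        flip_at i x \<in> {x. length x = 3^h \<and> maj_balanced h x} \<and> i \<in> maj_cert h (flip_at i x) \<and>
        MAJ h (flip_at i x) \<noteq> MAJ h x" for x i
      by (simp add: maj_balanced_flip)
  qed simp
  ultimately show ?thesis
    using sumPI_le_maxPI[of "3^h" "MAJ h"] by (simp add: order_antisym)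
qed

end
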